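(* Let $\phi:\mathbb{R}^2\to\mathbb{R}^2$ be an invertible affine transformation and let $\sigma$ be the coordinatewise $\textsc{ReLU}$ on $\mathbb R^2$. Let $x\in\mathbb{R}^2$ and $\mathcal T\subset\mathbb{R}^2$ be such that $x$ lies in a bounded path-connected component of $\mathbb{R}^2\setminus\mathcal T$. Put $x^\prime:=\phi^{-1}\circ\sigma\circ\phi(x)$ and $\mathcal T^\prime:=\phi^{-1}\circ\sigma\circ\phi(\mathcal T)$. Then: (i) if $x^\prime=x$ and $x^\prime\notin\mathcal T^\prime$, then $x^\prime$ lies in a bounded path-connected component of $\mathbb R^2\setminus \mathcal T^\prime$; (ii) if $x^\prime\ne x$, then $x^\prime\in\mathcal T^\prime$.
   Context: $\sigma(x_1,x_2)=(\max\{x_1,0\},\max\{x_2,0\})$. *)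

theory Defs
  imports "HOL-Analysis.Analysis"
begin

definition relu2 :: "real^2 \<Rightarrow> real^2" where
  "relu2 x = (\<chi> i. max (x $ i) 0)"

definition invertible_affine :: "(real^2 \<Rightarrow> real^2) \<Rightarrow> bool" where
  "invertible_affine \<phi> \<longleftrightarrow> (\<exists>L c. linear L \<and> bij L \<and> \<phi> = (\<lambda>x. L x + c))"

definition in_bounded_component :: "real^2 \<Rightarrow> (real^2) set \<Rightarrow> bool" where
  "in_bounded_component x T \<longleftrightarrow> x \<in> - T \<and> bounded (path_component_set (- T) x)"

end

theory Submission
  imports Defs
begin

(* An invertible affine map is a homeomorphism of the plane, so it carries bounded path
   components of complements to bounded path components; this reduces everything to the
   case \<phi> = id.  There the key observation is that ReLU is constant along every ray
   w - s e_i (s \<ge> 0) with w_i \<le> 0.  Such a ray is unbounded and connected, so if w lies in a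
   bounded component of -T the ray must meet T, whence relu w \<in> relu T.  For (ii) apply this
   to x itself.  For (i), relu is the identity on the closed positive quadrant Q, so
   Q - relu T \<subseteq> -T; a path from x in -relu T cannot leave Q, since its first boundary point
   would lie in the component of x in -T and hence in relu T.  Thus the component of x in
   -relu T is contained in the one in -T. *)

lemma continuous_image_path_component_subset:
  assumes "continuous_on UNIV f" "f ` S \<subseteq> S'"
  shows "f ` path_component_set S x \<subseteq> path_component_set S' (f x)"
proof (cases "x \<in> S")
  case True
  have "path_connected (f ` path_component_set S x)"
    by (intro path_connected_continuous_image path_connected_path_component)
       (auto intro: continuous_on_subset[OF assms(1)])
  moreover have "f ` path_component_set S x \<subseteq> S'"
    using assms(2) path_component_subset by blast
  ultimately show ?thesis
    using True by (intro path_component_maximal) (auto simp: path_component_refl)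
next
  case False
  then show ?thesis
    by (simp add: path_component_eq_empty[THEN iffD2])
qed

lemma homeomorphism_image_path_component:
  assumes "homeomorphism UNIV UNIV f g"
  shows "path_component_set (f ` S) (f x) = f ` path_component_set S x"
proof
  have fg: "f (g y) = y" for y
    using assms by (simp add: homeomorphism_apply2)
  have gf: "g (f z) = z" for z
    using assms by (simp add: homeomorphism_apply1)
  have "g ` path_component_set (f ` S) (f x) \<subseteq> path_component_set (g ` f ` S) (g (f x))"
    using assms by (intro continuous_image_path_component_subset) (auto dest: homeomorphism_cont2)
  also have "\<dots> = path_component_set S x"
    by (simp add: image_comp gf)
  finally have "f ` g ` path_component_set (f ` S) (f x) \<subseteq> f ` path_component_set S x"
    by (rule image_mono)
  then show "path_component_set (f ` S) (f x) \<subseteq> f ` path_component_set S x"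
    by (simp add: image_comp fg)
  show "f ` path_component_set S x \<subseteq> path_component_set (f ` S) (f x)"
    using assms by (intro continuous_image_path_component_subset) (auto dest: homeomorphism_cont1)
qed

lemma bounded_continuous_image:
  fixes f :: "'a::heine_borel \<Rightarrow> 'b::metric_space"
  assumes "continuous_on UNIV f" "bounded S"
  shows "bounded (f ` S)"
proof -
  have "compact (f ` closure S)"
    using assms by (intro compact_continuous_image)
      (auto intro: continuous_on_subset simp: compact_closure)
  then show ?thesis
    by (rule bounded_closure_image[OF compact_imp_bounded])
qed

lemma in_bounded_component_homeomorphism_image:
  assumes "homeomorphism UNIV UNIV f g" "in_bounded_component x T"
  shows "in_bounded_component (f x) (f ` T)"
proof -
  have "bij f"
    using assms(1) by (intro o_bij[of g]) (auto simp: fun_eq_iff homeomorphism_def)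
  then have compl: "- (f ` T) = f ` (- T)"
    by (simp add: bij_image_Compl_eq)
  have "bounded (f ` path_component_set (- T) x)"
    using assms by (intro bounded_continuous_image)
       (auto dest: homeomorphism_cont1 simp: in_bounded_component_def)
  then show ?thesis
    using assms(2) \<open>bij f\<close>
    by (simp add: in_bounded_component_def compl homeomorphism_image_path_component[OF assms(1)]
        bij_is_inj inj_image_mem_iff)
qed

lemma invertible_affine_homeomorphism:
  assumes "invertible_affine \<phi>"
  shows "homeomorphism UNIV UNIV \<phi> (inv \<phi>)"
proof -
  obtain L c where L: "linear L" "bij L" and \<phi>: "\<phi> = (\<lambda>x. L x + c)"
    using assms unfolding invertible_affine_def by blast
  have L_inv: "L (inv L y) = y" "inv L (L y) = y" for y
    using L(2) by (simp_all add: bij_is_inj bij_is_surj surj_f_inv_f)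
  have "bounded_linear L" "bounded_linear (inv L)"
    using L by (simp_all add: linear_conv_bounded_linear inj_linear_imp_inv_bounded_linear bij_is_inj)
  then have "continuous_on UNIV L" "continuous_on UNIV (inv L)"
    by (simp_all add: linear_continuous_on)
  then have "continuous_on UNIV \<phi>" "continuous_on UNIV (\<lambda>y. inv L (y - c))"
    unfolding \<phi> by (auto intro!: continuous_intros intro: continuous_on_compose2[of UNIV "inv L"])
  then have "homeomorphism UNIV UNIV \<phi> (\<lambda>y. inv L (y - c))"
    by (rule homeomorphismI) (simp_all add: \<phi> L_inv)
  moreover have "inv \<phi> = (\<lambda>y. inv L (y - c))"
    unfolding \<phi> by (rule inv_equality) (simp_all add: L_inv)
  ultimately show ?thesis
    by simp
qed

lemma relu2_nth [simp]: "relu2 x $ i = max (x $ i) 0"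
  by (simp add: relu2_def)

lemma relu2_eq_self_iff: "relu2 y = y \<longleftrightarrow> (\<forall>i. 0 \<le> y $ i)"
  unfolding vec_eq_iff relu2_nth by (metis max.absorb1 max.cobounded2)

lemma unbounded_ray:
  fixes v w :: "'a::real_normed_vector"
  assumes "v \<noteq> 0"
  shows "\<not> bounded ((\<lambda>s. w - s *\<^sub>R v) ` {0..})"
proof
  assume "bounded ((\<lambda>s. w - s *\<^sub>R v) ` {0..})"
  then obtain B where B: "\<And>s. s \<ge> 0 \<Longrightarrow> norm (w - s *\<^sub>R v) \<le> B"
    by (auto simp: bounded_iff)
  define s where "s = (norm w + \<bar>B\<bar> + 1) / norm v"
  have "s \<ge> 0"
    by (simp add: s_def)
  have "norm (s *\<^sub>R v) \<le> norm w + norm (w - s *\<^sub>R v)"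
    using norm_triangle_ineq4[of w "w - s *\<^sub>R v"] by simp
  also have "\<dots> \<le> norm w + B"
    using B[OF \<open>s \<ge> 0\<close>] by simp
  finally show False
    using assms by (simp add: s_def)
qed

lemma in_bounded_component_path_component:
  assumes "in_bounded_component x T" "y \<in> path_component_set (- T) x"
  shows "in_bounded_component y T"
  using assms path_component_subset path_component_eq
  unfolding in_bounded_component_def by fastforce

lemma relu2_mem_image_if_nonpos_component:
  assumes "in_bounded_component w T" "w $ i \<le> 0"
  shows "relu2 w \<in> relu2 ` T"
proof (rule ccontr)
  assume w_notin: "relu2 w \<notin> relu2 ` T"
  define R where "R = (\<lambda>s. w - s *\<^sub>R axis i 1) ` {0..}"
  have "relu2 r = relu2 w" if "r \<in> R" for r
    using that assms(2) by (auto simp: R_def vec_eq_iff axis_def)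
  then have "R \<subseteq> - T"
    using w_notin by (metis ComplI image_eqI subsetI)
  moreover have "path_connected R"
    unfolding R_def by (rule path_connected_continuous_image)
      (auto intro!: continuous_intros convex_imp_path_connected simp: convex_real_interval)
  moreover have "w \<in> R"
    unfolding R_def by (auto intro: image_eqI[where x=0])
  ultimately have "R \<subseteq> path_component_set (- T) w"
    by (intro path_component_maximal)
  then have "bounded R"
    using assms(1) bounded_subset unfolding in_bounded_component_def by blast
  then show False
    using unbounded_ray[of "axis i (1::real)" w] by (simp add: R_def axis_eq_0_iff)
qed

lemma relu2_mem_image_if_moved:
  assumes "in_bounded_component x T" "relu2 x \<noteq> x"
  shows "relu2 x \<in> relu2 ` T"
proof -
  obtain i where "x $ i \<le> 0"
    using assms(2) relu2_eq_self_iff by (metis linear)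
  then show ?thesis
    using assms(1) by (rule relu2_mem_image_if_nonpos_component[rotated])
qed

lemma frontier_nonneg_orthant:
  assumes "w \<in> frontier {y::real^'n. \<forall>i. 0 \<le> y $ i}"
  obtains i where "w $ i = 0"
proof -
  let ?Q = "{y::real^'n. \<forall>i. 0 \<le> y $ i}"
  have "open {y::real^'n. \<forall>i. 0 < y $ i}"
    by (simp add: Collect_all_eq open_INT open_halfspace_component_gt_cart)
  then have "{y. \<forall>i. 0 < y $ i} \<subseteq> interior ?Q"
    by (intro interior_maximal) (auto intro: less_imp_le)
  moreover have "closed ?Q"
    by (simp add: Collect_all_eq closed_INT closed_halfspace_component_ge_cart)
  ultimately have "w \<in> ?Q" "w \<notin> interior ?Q"
    using assms by (auto simp: frontier_def)
  then obtain i where "\<not> 0 < w $ i"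
    using \<open>{y. \<forall>i. 0 < y $ i} \<subseteq> interior ?Q\<close> by blast
  with \<open>w \<in> ?Q\<close> have "w $ i = 0"
    by (metis mem_Collect_eq order.antisym not_less)
  then show ?thesis
    by (rule that)
qed

lemma path_component_subset_if_frontier_unreachable:
  fixes Q :: "'a::real_normed_vector set"
  assumes "closed Q" "x \<in> Q" "path_component_set (S \<inter> Q) x \<inter> frontier Q = {}"
  shows "path_component_set S x \<subseteq> Q"
proof
  fix y
  assume "y \<in> path_component_set S x"
  then obtain g where g: "path g" "path_image g \<subseteq> S" "pathstart g = x" "pathfinish g = y"
    by (auto simp: path_component_set)
  show "y \<in> Q"
  proof (rule ccontr)
    assume "y \<notin> Q"
    then obtain h where h: "path h" "pathstart h = x" "path_image h \<subseteq> path_image g \<inter> Q"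
      "pathfinish h \<in> frontier Q"
      using exists_path_subpath_to_frontier_closed[OF assms(1) g(1)] g(3,4) assms(2) by metis
    then have "pathfinish h \<in> path_component_set (S \<inter> Q) x"
      using g(2) by (auto simp: path_component_set)
    with h(4) assms(3) show False
      by blast
  qed
qed

lemma in_bounded_component_relu2_image_if_fixed:
  assumes "in_bounded_component x T" "relu2 x = x" "x \<notin> relu2 ` T"
  shows "in_bounded_component x (relu2 ` T)"
proof -
  define Q where "Q = {y::real^2. \<forall>i. 0 \<le> y $ i}"
  have "closed Q"
    by (simp add: Q_def Collect_all_eq closed_INT closed_halfspace_component_ge_cart)
  have "x \<in> Q"
    using assms(2) by (simp add: Q_def relu2_eq_self_iff)
  have Q_diff: "- relu2 ` T \<inter> Q \<subseteq> - T"
    by (force simp: Q_def simp flip: relu2_eq_self_iff)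
  have "w \<notin> frontier Q" if w: "w \<in> path_component_set (- relu2 ` T \<inter> Q) x" for w
  proof
    assume "w \<in> frontier Q"
    then obtain i where "w $ i = 0"
      unfolding Q_def by (rule frontier_nonneg_orthant)
    moreover have "in_bounded_component w T"
      using w path_component_mono[OF Q_diff] assms(1) in_bounded_component_path_component by blast
    ultimately have "relu2 w \<in> relu2 ` T"
      using relu2_mem_image_if_nonpos_component[of w T i] by simp
    moreover have "relu2 w = w"
      using \<open>w \<in> frontier Q\<close> \<open>closed Q\<close> frontier_subset_closed
      by (fastforce simp: Q_def relu2_eq_self_iff)
    moreover have "w \<notin> relu2 ` T"
      using w path_component_subset by blast
    ultimately show False
      by simp
  qed
  then have "path_component_set (- relu2 ` T) x \<subseteq> Q"
    using \<open>closed Q\<close> \<open>x \<in> Q\<close> by (intro path_component_subset_if_frontier_unreachable) auto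
  then have "path_component_set (- relu2 ` T) x \<subseteq> - T"
    using Q_diff path_component_subset by blast
  then have "path_component_set (- relu2 ` T) x \<subseteq> path_component_set (- T) x"
    using assms(3) by (intro path_component_maximal) (auto simp: path_component_refl)
  moreover have "bounded (path_component_set (- T) x)"
    using assms(1) by (simp add: in_bounded_component_def)
  ultimately show ?thesis
    using assms(3) bounded_subset by (auto simp: in_bounded_component_def)
qed

theorem lemma2:
  fixes \<phi> :: "real^2 \<Rightarrow> real^2" and x :: "real^2" and T :: "(real^2) set"
  assumes "invertible_affine \<phi>"
    and "in_bounded_component x T"
  shows "(inv \<phi> (relu2 (\<phi> x)) = x \<and> inv \<phi> (relu2 (\<phi> x)) \<notin> (inv \<phi> \<circ> relu2 \<circ> \<phi>) ` T
           \<longrightarrow> in_bounded_component (inv \<phi> (relu2 (\<phi> x))) ((inv \<phi> \<circ> relu2 \<circ> \<phi>) ` T))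
       \<and> (inv \<phi> (relu2 (\<phi> x)) \<noteq> x \<longrightarrow> inv \<phi> (relu2 (\<phi> x)) \<in> (inv \<phi> \<circ> relu2 \<circ> \<phi>) ` T)"
proof -
  have hom: "homeomorphism UNIV UNIV \<phi> (inv \<phi>)"
    using assms(1) by (rule invertible_affine_homeomorphism)
  then have hom_inv: "homeomorphism UNIV UNIV (inv \<phi>) \<phi>"
    by (rule homeomorphism_symD)
  have inv_\<phi>: "inv \<phi> (\<phi> z) = z" "\<phi> (inv \<phi> z) = z" for z
    using hom by (simp_all add: homeomorphism_apply1 homeomorphism_apply2)
  then have inv_\<phi>_eq: "inv \<phi> y = z \<longleftrightarrow> y = \<phi> z" for y z
    by auto
  have "inj (inv \<phi>)"
    by (metis injI inv_\<phi>(2))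
  then have inv_\<phi>_mem: "inv \<phi> y \<in> inv \<phi> ` S \<longleftrightarrow> y \<in> S" for y S
    by (rule inj_image_mem_iff)
  have image: "(inv \<phi> \<circ> relu2 \<circ> \<phi>) ` T = inv \<phi> ` relu2 ` (\<phi> ` T)"
    by (simp add: image_comp)
  have bounded_\<phi>: "in_bounded_component (\<phi> x) (\<phi> ` T)"
    using hom assms(2) by (rule in_bounded_component_homeomorphism_image)
  show ?thesis
    unfolding image inv_\<phi>_eq inv_\<phi>_mem
  proof (intro conjI impI)
    assume fixed: "relu2 (\<phi> x) = \<phi> x \<and> relu2 (\<phi> x) \<notin> relu2 ` \<phi> ` T"
    with bounded_\<phi> have "in_bounded_component (\<phi> x) (relu2 ` \<phi> ` T)"
      by (intro in_bounded_component_relu2_image_if_fixed) auto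
    then have "in_bounded_component (inv \<phi> (\<phi> x)) (inv \<phi> ` relu2 ` \<phi> ` T)"
      by (rule in_bounded_component_homeomorphism_image[OF hom_inv])
    then show "in_bounded_component (inv \<phi> (relu2 (\<phi> x))) (inv \<phi> ` relu2 ` \<phi> ` T)"
      using fixed by simp
  next
    assume "relu2 (\<phi> x) \<noteq> \<phi> x"
    with bounded_\<phi> show "relu2 (\<phi> x) \<in> relu2 ` \<phi> ` T"
      by (rule relu2_mem_image_if_moved)
  qed
qed

end
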